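(* Let $f=a_0+a_1 z+\cdots+a_mz^m\in \mathbb{Z}[z]$ be primitive (the greatest common divisor of its coefficients is $1$). Suppose there exists a positive real number $\alpha$ such that \[ |a_m| \alpha^m>|a_0|+|a_1|\alpha+\cdots+|a_{m-1}|\alpha^{m-1}. \] Further, suppose there exist natural numbers $n$, $d$, $k$, $\ell \leq m$, and a prime $p$ with $p\nmid d$ such that $n\geq \alpha+d$, $f(n)=\pm p^k d$, $\gcd(k,\ell)=1$, $p^k$ divides $\frac{f^{(i)}(n)}{i!}$ for each $i=0, 1, \ldots,\ell-1$, and, in case $k>1$, also $p\nmid \frac{f^{(\ell)}(n)}{\ell!}$. Then $f$ is irreducible in $\mathbb{Z}[z]$.
   Context: $f^{(i)}$ denotes the $i$-th derivative of $f$ with respect to $z$. Natural numbers are positive integers. *)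

theory Defs
  imports "HOL-Computational_Algebra.Computational_Algebra"
begin

text \<open>The i-th Taylor coefficient f^(i)(x) / i! of an integer polynomial at an integer point
  (the division is exact).\<close>
definition taylor_coeff :: "int poly \<Rightarrow> nat \<Rightarrow> int \<Rightarrow> int" where
  "taylor_coeff f i x = poly ((pderiv ^^ i) f) x div fact i"

end

theory Submission
  imports Defs
begin

(*
  Suppose f = g h with neither factor a unit. Since f is primitive, g and h are nonconstant. The
  dominance hypothesis puts every complex root of f into the disc |z| < alpha, hence |g(n)| > d and
  |h(n)| > d, and as g(n) h(n) = +-p^k d the prime p divides both g(n) and h(n). For k = 1 this
  contradicts p not dividing d.

  For k > 1 pass to F(z) = f(z + n) = G(z) H(z), whose coefficients are the Taylor coefficients
  f^(i)(n)/i!, and weight a nonzero coefficient c_i by l v_p(c_i) + k i. The minimal weight of a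
  product is at most the sum of the minimal weights, and the hypotheses make every weight of F at
  least l k. Since p does not divide F_l, some s <= l has p dividing neither G_s nor H_(l-s); as p
  divides G(0) and H(0), 0 < s < l. Bounding the minimal weights of G and H at the indices 0 and
  s, resp. 0 and l - s, and using v_p(G(0)) + v_p(H(0)) = k, all bounds become equalities:
  l v_p(G(0)) = k s, which contradicts gcd(k, l) = 1.
*)

lemma taylor_coeff_eq_coeff_pcompose:
  "taylor_coeff f i c = coeff (pcompose f [:c, 1:]) i"
proof -
  have "(pderiv ^^ j) (pcompose f [:c, 1:]) = pcompose ((pderiv ^^ j) f) [:c, 1:]" for j
    by (induction j) (auto simp: pderiv_pcompose pderiv_pCons)
  then have "poly ((pderiv ^^ i) f) c = coeff ((pderiv ^^ i) (pcompose f [:c, 1:])) 0"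
    by (simp add: poly_pcompose flip: poly_0_coeff_0)
  also have "\<dots> = fact i * coeff (pcompose f [:c, 1:]) i"
    by (simp add: coeff_higher_pderiv pochhammer_fact)
  finally show ?thesis
    unfolding taylor_coeff_def by simp
qed

lemma coeff_0_pcompose_shift: "coeff (pcompose f [:c, 1:]) 0 = poly f c"
  by (simp add: poly_pcompose flip: poly_0_coeff_0)

lemma multiplicity_sum_dominant_term:
  fixes q :: "'a :: factorial_semiring"
  assumes "\<not> is_unit q" "finite A" "x \<in> A" "f x \<noteq> 0"
    and others: "\<And>y. y \<in> A - {x} \<Longrightarrow> q ^ Suc (multiplicity q (f x)) dvd f y"
  shows "sum f A \<noteq> 0 \<and> multiplicity q (sum f A) = multiplicity q (f x)"
proof -
  define v where "v = multiplicity q (f x)"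
  have split: "sum f A = f x + sum f (A - {x})"
    using assms(2,3) by (simp add: sum.remove)
  have rest: "q ^ Suc v dvd sum f (A - {x})"
    using others by (auto simp: v_def intro: dvd_sum)
  have "\<not> q ^ Suc v dvd f x"
    using power_dvd_iff_le_multiplicity[OF \<open>f x \<noteq> 0\<close> \<open>\<not> is_unit q\<close>, of "Suc v"]
    by (simp add: v_def del: power_Suc)
  then have not_dvd: "\<not> q ^ Suc v dvd sum f A"
    using rest by (simp add: split dvd_add_left_iff)
  have "q ^ v dvd sum f (A - {x})"
    using rest by (simp add: dvd_mult_right)
  then have "q ^ v dvd sum f A"
    using multiplicity_dvd[of q "f x"] by (simp add: split v_def)
  with not_dvd show ?thesis
    by (auto simp: v_def intro: multiplicity_eqI)
qed

lemma multiplicity_power_mult_not_dvd: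
  fixes p :: "'a :: factorial_semiring"
  assumes "prime_elem p" "\<not> p dvd d"
  shows "multiplicity p (p ^ k * d) = k"
  using multiplicity_prime_elem_times_other[OF assms, of "p ^ k"] assms(1) by (simp add: mult.commute)

definition coeff_weight :: "'a :: factorial_semiring \<Rightarrow> nat \<Rightarrow> nat \<Rightarrow> 'a poly \<Rightarrow> nat \<Rightarrow> nat" where
  "coeff_weight q a b G i = a * multiplicity q (coeff G i) + b * i"

(* For a prime q: the minimum of a v_q(c_i) + b i over the nonzero coefficients c_i of G, i.e. the
   height of the supporting line of slope -b/a of the Newton polygon of G. For G = 0 it is the junk
   value LEAST of the empty set. *)
definition weighted_valuation :: "'a :: factorial_semiring \<Rightarrow> nat \<Rightarrow> nat \<Rightarrow> 'a poly \<Rightarrow> nat" where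
  "weighted_valuation q a b G = (LEAST w. \<exists>i. coeff G i \<noteq> 0 \<and> w = coeff_weight q a b G i)"

definition least_weight_index :: "'a :: factorial_semiring \<Rightarrow> nat \<Rightarrow> nat \<Rightarrow> 'a poly \<Rightarrow> nat" where
  "least_weight_index q a b G =
     (LEAST i. coeff G i \<noteq> 0 \<and> coeff_weight q a b G i = weighted_valuation q a b G)"

lemma weighted_valuation_le:
  "coeff G i \<noteq> 0 \<Longrightarrow> weighted_valuation q a b G \<le> coeff_weight q a b G i"
  unfolding weighted_valuation_def by (rule Least_le) blast

lemma weighted_valuation_attained:
  assumes "G \<noteq> 0"
  shows "coeff G (least_weight_index q a b G) \<noteq> 0 \<and>
         coeff_weight q a b G (least_weight_index q a b G) = weighted_valuation q a b G"
proof -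
  have "\<exists>i. coeff G i \<noteq> 0 \<and> weighted_valuation q a b G = coeff_weight q a b G i"
    unfolding weighted_valuation_def
    by (rule LeastI[of _ "coeff_weight q a b G (degree G)"]) (use assms in \<open>auto intro!: exI[of _ "degree G"]\<close>)
  then obtain i where "coeff G i \<noteq> 0 \<and> coeff_weight q a b G i = weighted_valuation q a b G"
    by auto
  then show ?thesis
    unfolding least_weight_index_def by (rule LeastI)
qed

lemma weighted_valuation_less_before_least_weight_index:
  assumes "i < least_weight_index q a b G" "coeff G i \<noteq> 0"
  shows "weighted_valuation q a b G < coeff_weight q a b G i"
  using not_less_Least[OF assms(1)[unfolded least_weight_index_def]] weighted_valuation_le[OF assms(2)] assms(2)
  by (simp add: order.strict_iff_order)

lemma weighted_valuation_geI:
  assumes "G \<noteq> 0" "\<And>i. coeff G i \<noteq> 0 \<Longrightarrow> c \<le> coeff_weight q a b G i"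
  shows "c \<le> weighted_valuation q a b G"
  using weighted_valuation_attained[OF assms(1)] assms(2) by metis

lemma coeff_weight_sum_gt_off_least_weight_indices:
  fixes q :: "'a :: factorial_semiring" and a b :: nat and G H :: "'a poly"
  defines "i0 \<equiv> least_weight_index q a b G" and "j0 \<equiv> least_weight_index q a b H"
  assumes "i \<le> i0 + j0" "i \<noteq> i0" "coeff G i \<noteq> 0" "coeff H (i0 + j0 - i) \<noteq> 0"
  shows "weighted_valuation q a b G + weighted_valuation q a b H
         < coeff_weight q a b G i + coeff_weight q a b H (i0 + j0 - i)"
proof (cases "i < i0")
  case True
  then show ?thesis
    using weighted_valuation_less_before_least_weight_index[of i q a b G] assms
      weighted_valuation_le[of H "i0 + j0 - i" q a b] by (simp add: add_less_le_mono)
next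
  case False
  then have "i0 + j0 - i < j0"
    using assms(3,4) by linarith
  then show ?thesis
    using weighted_valuation_less_before_least_weight_index[of "i0 + j0 - i" q a b H] assms
      weighted_valuation_le[of G i q a b] by (simp add: add_le_less_mono)
qed

lemma weighted_valuation_mult_le:
  fixes q :: "'a :: factorial_semiring"
  assumes "prime_elem q" "G \<noteq> 0" "H \<noteq> 0"
  shows "weighted_valuation q a b (G * H) \<le> weighted_valuation q a b G + weighted_valuation q a b H"
proof -
  define i0 where "i0 = least_weight_index q a b G"
  define j0 where "j0 = least_weight_index q a b H"
  have i0: "coeff G i0 \<noteq> 0" "coeff_weight q a b G i0 = weighted_valuation q a b G"
    using weighted_valuation_attained[OF \<open>G \<noteq> 0\<close>] by (simp_all add: i0_def)
  have j0: "coeff H j0 \<noteq> 0" "coeff_weight q a b H j0 = weighted_valuation q a b H"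
    using weighted_valuation_attained[OF \<open>H \<noteq> 0\<close>] by (simp_all add: j0_def)
  define N where "N = i0 + j0"
  define summand where "summand i = coeff G i * coeff H (N - i)" for i
  have weight_summand:
    "a * multiplicity q (summand i) + b * N = coeff_weight q a b G i + coeff_weight q a b H (N - i)"
    if "i \<le> N" "coeff G i \<noteq> 0" "coeff H (N - i) \<noteq> 0" for i
  proof -
    have "b * N = b * i + b * (N - i)"
      using that(1) by (simp flip: add_mult_distrib2)
    then show ?thesis
      using prime_elem_multiplicity_mult_distrib[OF \<open>prime_elem q\<close> that(2,3)]
      by (simp add: summand_def coeff_weight_def distrib_left)
  qed
  have weight_i0: "a * multiplicity q (summand i0) + b * N = weighted_valuation q a b G + weighted_valuation q a b H"
    using weight_summand[of i0] i0 j0 by (simp add: N_def)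
  have "q ^ Suc (multiplicity q (summand i0)) dvd summand i" if "i \<in> {..N} - {i0}" for i
  proof (cases "coeff G i = 0 \<or> coeff H (N - i) = 0")
    case False
    then have "weighted_valuation q a b G + weighted_valuation q a b H
               < a * multiplicity q (summand i) + b * N"
      using coeff_weight_sum_gt_off_least_weight_indices[of i q a b G H, folded i0_def j0_def N_def]
        weight_summand[of i] that by simp
    then have "a * multiplicity q (summand i0) < a * multiplicity q (summand i)"
      using weight_i0 by linarith
    then have "multiplicity q (summand i0) < multiplicity q (summand i)"
      by simp
    then show ?thesis
      by (intro multiplicity_dvd') simp
  qed (auto simp: summand_def)
  then have "coeff (G * H) N \<noteq> 0 \<and> multiplicity q (coeff (G * H) N) = multiplicity q (summand i0)"
    unfolding coeff_mult summand_def[symmetric] using \<open>prime_elem q\<close> i0(1) j0(1)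
    by (intro multiplicity_sum_dominant_term) (auto simp: N_def summand_def prime_elem_not_unit)
  then show ?thesis
    using weighted_valuation_le[of "G * H" N q a b] weight_i0 by (simp add: coeff_weight_def)
qed

lemma weighted_valuation_ge_if_power_dvd_initial_coeffs:
  fixes p :: "'a :: factorial_semiring"
  assumes "\<not> is_unit p" "F \<noteq> 0" "\<And>i. i < l \<Longrightarrow> p ^ k dvd coeff F i"
  shows "l * k \<le> weighted_valuation p l k F"
proof (rule weighted_valuation_geI[OF \<open>F \<noteq> 0\<close>])
  fix i assume "coeff F i \<noteq> 0"
  show "l * k \<le> coeff_weight p l k F i"
  proof (cases "i < l")
    case True
    then have "k \<le> multiplicity p (coeff F i)"
      using assms(3) power_dvd_iff_le_multiplicity[OF \<open>coeff F i \<noteq> 0\<close> \<open>\<not> is_unit p\<close>] by blast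
    then have "l * k \<le> l * multiplicity p (coeff F i)"
      by (rule mult_le_mono2)
    then show ?thesis
      unfolding coeff_weight_def by linarith
  next
    case False
    then have "l * k \<le> k * i"
      by (simp add: mult.commute)
    then show ?thesis
      unfolding coeff_weight_def by linarith
  qed
qed

lemma coeff_mult_not_dvdE:
  fixes p :: "'a :: comm_semiring_1"
  assumes "\<not> p dvd coeff (G * H) l"
  obtains s where "s \<le> l" "\<not> p dvd coeff G s" "\<not> p dvd coeff H (l - s)"
proof -
  have "\<exists>s\<le>l. \<not> p dvd coeff G s * coeff H (l - s)"
    using assms unfolding coeff_mult by (meson atMost_iff dvd_sum)
  then show ?thesis
    using that by (meson dvd_mult dvd_mult2)
qed

lemma prime_not_dvd_both_coeff_0:
  fixes p :: "'a :: factorial_semiring" and k l :: nat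
  assumes "prime_elem p" "F = G * H" "coeff F 0 \<noteq> 0" "multiplicity p (coeff F 0) = k"
    and "0 < l" "coprime k l"
    and low: "\<And>i. i < l \<Longrightarrow> p ^ k dvd coeff F i"
    and "\<not> p dvd coeff F l"
  shows "\<not> (p dvd coeff G 0 \<and> p dvd coeff H 0)"
proof
  assume dvd_0: "p dvd coeff G 0 \<and> p dvd coeff H 0"
  obtain s where s: "s \<le> l" "\<not> p dvd coeff G s" "\<not> p dvd coeff H (l - s)"
    using coeff_mult_not_dvdE \<open>F = G * H\<close> \<open>\<not> p dvd coeff F l\<close> by blast
  have "0 < s" "s < l"
    using s dvd_0 by (auto intro!: Nat.gr0I) (metis diff_self_eq_0 le_neq_implies_less)
  have nz: "coeff G 0 \<noteq> 0" "coeff H 0 \<noteq> 0" "G \<noteq> 0" "H \<noteq> 0" "F \<noteq> 0"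
    using \<open>coeff F 0 \<noteq> 0\<close> by (auto simp: \<open>F = G * H\<close> coeff_mult_0)
  define a where "a = multiplicity p (coeff G 0)"
  define b where "b = multiplicity p (coeff H 0)"
  have "a + b = k"
    using prime_elem_multiplicity_mult_distrib[OF \<open>prime_elem p\<close> nz(1,2)] assms(2,4)
    by (simp add: a_def b_def coeff_mult_0)
  let ?w = "weighted_valuation p l k"
  have "l * k \<le> ?w F"
    using weighted_valuation_ge_if_power_dvd_initial_coeffs[OF prime_elem_not_unit[OF \<open>prime_elem p\<close>] nz(5) low] .
  also have "\<dots> \<le> ?w G + ?w H"
    using weighted_valuation_mult_le[OF \<open>prime_elem p\<close> nz(3,4)] \<open>F = G * H\<close> by simp
  finally have "l * k \<le> ?w G + ?w H" .
  moreover have "?w G \<le> l * a" "?w H \<le> l * b"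
    using weighted_valuation_le[OF nz(1)] weighted_valuation_le[OF nz(2)]
    by (simp_all add: coeff_weight_def a_def b_def)
  moreover have "coeff G s \<noteq> 0" "coeff H (l - s) \<noteq> 0"
    using s by auto
  then have "?w G \<le> k * s" "?w H \<le> k * (l - s)"
    using weighted_valuation_le[of G s p l k] weighted_valuation_le[of H "l - s" p l k] s
    by (simp_all add: coeff_weight_def not_dvd_imp_multiplicity_0)
  moreover have "l * a + l * b = l * k" "k * s + k * (l - s) = l * k"
    using \<open>a + b = k\<close> \<open>s < l\<close> by (simp_all flip: add_mult_distrib2)
  ultimately have "l * a = k * s"
    by linarith
  then have "l dvd s"
    using \<open>coprime k l\<close> by (metis coprime_commute coprime_dvd_mult_right_iff dvd_triv_left)
  with \<open>0 < s\<close> \<open>s < l\<close> show False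
    by (simp add: nat_dvd_not_less)
qed

lemma prime_not_dvd_both_values_of_factors:
  fixes f g h :: "int poly" and p c :: int and k l :: nat
  assumes "prime p" "f = g * h" "poly f c \<noteq> 0" "multiplicity p (poly f c) = k"
    and "0 < l" "coprime k l"
    and "\<And>i. i < l \<Longrightarrow> p ^ k dvd taylor_coeff f i c"
    and "1 < k \<Longrightarrow> \<not> p dvd taylor_coeff f l c"
  shows "\<not> (p dvd poly g c \<and> p dvd poly h c)"
proof
  assume dvd_values: "p dvd poly g c \<and> p dvd poly h c"
  then have "p ^ 2 dvd poly f c"
    using \<open>f = g * h\<close> by (simp add: power2_eq_square mult_dvd_mono)
  then have "2 \<le> multiplicity p (poly f c)"
    using power_dvd_iff_le_multiplicity[OF \<open>poly f c \<noteq> 0\<close> prime_elem_not_unit] \<open>prime p\<close> by blast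
  then have "1 < k"
    using assms(4) by simp
  have "\<not> (p dvd coeff (pcompose g [:c, 1:]) 0 \<and> p dvd coeff (pcompose h [:c, 1:]) 0)"
  proof (rule prime_not_dvd_both_coeff_0[where F = "pcompose f [:c, 1:]" and k = k and l = l])
    show "prime_elem p"
      using \<open>prime p\<close> by (rule prime_imp_prime_elem)
    show "pcompose f [:c, 1:] = pcompose g [:c, 1:] * pcompose h [:c, 1:]"
      using \<open>f = g * h\<close> by (simp add: pcompose_mult)
  qed (use assms(3-) \<open>1 < k\<close> in \<open>simp_all add: coeff_0_pcompose_shift flip: taylor_coeff_eq_coeff_pcompose\<close>)
  with dvd_values show False
    by (simp add: coeff_0_pcompose_shift)
qed

lemma map_poly_of_int_mult:
  "map_poly (of_int :: int \<Rightarrow> 'a :: comm_ring_1) (p * q) = map_poly of_int p * map_poly of_int q"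
  by (rule poly_eqI) (simp add: coeff_map_poly coeff_mult)

lemma poly_map_poly_of_int:
  "poly (map_poly (of_int :: int \<Rightarrow> 'a :: comm_ring_1) p) (of_int x) = of_int (poly p x)"
  by (induction p) (simp_all add: map_poly_pCons)

lemma norm_root_less_of_dominant_lead_coeff:
  fixes f :: "'a :: real_normed_field poly" and \<alpha> :: real
  assumes "0 < \<alpha>"
    and dominant: "(\<Sum>i<degree f. norm (coeff f i) * \<alpha> ^ i) < norm (lead_coeff f) * \<alpha> ^ degree f"
    and "poly f z = 0"
  shows "norm z < \<alpha>"
proof (rule ccontr)
  assume "\<not> norm z < \<alpha>"
  define m where "m = degree f"
  define t where "t = norm z / \<alpha>"
  have "1 \<le> t" and z_t: "norm z = \<alpha> * t"
    using \<open>\<not> norm z < \<alpha>\<close> \<open>0 < \<alpha>\<close> by (simp_all add: t_def)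
  have "0 = (\<Sum>i<m. coeff f i * z ^ i) + coeff f m * z ^ m"
    using \<open>poly f z = 0\<close> by (simp add: poly_altdef m_def lessThan_Suc_atMost[symmetric])
  then have lead_term: "coeff f m * z ^ m = - (\<Sum>i<m. coeff f i * z ^ i)"
    by (simp add: eq_neg_iff_add_eq_0 add.commute)
  have "norm (lead_coeff f) * (\<alpha> * t) ^ m = norm (coeff f m * z ^ m)"
    by (simp add: norm_mult norm_power z_t m_def)
  also have "\<dots> = norm (\<Sum>i<m. coeff f i * z ^ i)"
    by (simp add: lead_term)
  also have "\<dots> \<le> (\<Sum>i<m. norm (coeff f i) * \<alpha> ^ i * t ^ i)"
    using norm_sum[of "\<lambda>i. coeff f i * z ^ i" "{..<m}"]
    by (simp add: norm_mult norm_power z_t power_mult_distrib mult.assoc)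
  also have "\<dots> \<le> (\<Sum>i<m. norm (coeff f i) * \<alpha> ^ i) * t ^ m"
    unfolding sum_distrib_right
    by (rule sum_mono) (use \<open>1 \<le> t\<close> \<open>0 < \<alpha>\<close> in \<open>auto intro!: mult_left_mono power_increasing\<close>)
  also have "\<dots> < norm (lead_coeff f) * (\<alpha> * t) ^ m"
    using dominant \<open>1 \<le> t\<close> unfolding m_def power_mult_distrib mult.assoc[symmetric]
    by (intro mult_strict_right_mono) auto
  finally show False
    by simp
qed

lemma norm_poly_gt_of_roots_in_ball:
  fixes g :: "complex poly" and \<alpha> d :: real
  assumes "0 < degree g" "1 \<le> norm (lead_coeff g)"
    and roots: "\<And>z. poly g z = 0 \<Longrightarrow> norm z < \<alpha>"
    and "\<alpha> + d \<le> norm w" "1 \<le> d"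
  shows "d < norm (poly g w)"
proof -
  obtain r where r: "smult (lead_coeff g) (\<Prod>i<degree g. [:- r i, 1:]) = g"
    by (rule complex_poly_decompose')
  have poly_g: "poly g x = lead_coeff g * (\<Prod>i<degree g. x - r i)" for x
    by (subst r[symmetric]) (simp add: poly_prod)
  have "norm (r i) < \<alpha>" if "i < degree g" for i
    using roots[of "r i"] that by (auto simp: poly_g)
  then have far: "d < norm (w - r i)" if "i < degree g" for i
    using norm_triangle_ineq2[of w "r i"] that \<open>\<alpha> + d \<le> norm w\<close> by fastforce
  have "d \<le> d ^ degree g"
    using power_increasing[of 1 "degree g" d] \<open>0 < degree g\<close> \<open>1 \<le> d\<close> by simp
  also have "\<dots> < (\<Prod>i<degree g. norm (w - r i))"
    using prod_mono_strict[of 0 "{..<degree g}" "\<lambda>_. d"] far \<open>0 < degree g\<close> \<open>1 \<le> d\<close>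
    by (force intro: less_imp_le)
  also have "\<dots> \<le> norm (lead_coeff g) * (\<Prod>i<degree g. norm (w - r i))"
    using mult_right_mono[OF \<open>1 \<le> norm (lead_coeff g)\<close>] by (simp add: prod_nonneg)
  also have "\<dots> = norm (poly g w)"
    by (simp add: poly_g norm_mult prod_norm)
  finally show ?thesis .
qed

lemma abs_poly_gt_of_complex_roots_in_ball:
  fixes g :: "int poly" and \<alpha> d :: real and x :: int
  assumes "0 < degree g"
    and roots: "\<And>z :: complex. poly (map_poly of_int g) z = 0 \<Longrightarrow> norm z < \<alpha>"
    and "\<alpha> + d \<le> of_int x" "1 \<le> d"
  shows "d < \<bar>of_int (poly g x)\<bar>"
proof -
  have "lead_coeff g \<noteq> 0"
    using \<open>0 < degree g\<close> by auto
  then have "1 \<le> norm (lead_coeff (map_poly of_int g) :: complex)"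
    by (simp add: degree_map_poly coeff_map_poly del: leading_coeff_0_iff)
  then have "d < norm (poly (map_poly of_int g) (of_int x :: complex))"
    using assms by (intro norm_poly_gt_of_roots_in_ball[where \<alpha> = \<alpha>]) (simp_all add: degree_map_poly)
  then show ?thesis
    by (simp add: poly_map_poly_of_int)
qed

lemma degree_pos_of_nonunit_factor_of_primitive:
  fixes f g h :: "'a :: {factorial_ring_gcd, semiring_gcd_mult_normalize} poly"
  assumes "content f = 1" "f = g * h" "\<not> is_unit g"
  shows "0 < degree g"
proof (rule ccontr)
  assume "\<not> 0 < degree g"
  then obtain c where "g = [:c:]"
    by (metis degree_0_id neq0_conv)
  moreover have "content g = 1"
    using assms(1,2) content_prod_eq_1_iff by blast
  ultimately have "is_unit c"
    by (simp add: normalize_1_iff)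
  with \<open>g = [:c:]\<close> \<open>\<not> is_unit g\<close> show False
    by (simp add: is_unit_const_poly_iff)
qed

lemma prime_dvd_of_large_divisor:
  fixes p x d :: int
  assumes "prime p" "x dvd p ^ k * d" "d \<noteq> 0" "\<bar>d\<bar> < \<bar>x\<bar>"
  shows "p dvd x"
proof (rule ccontr)
  assume "\<not> p dvd x"
  then have "coprime x (p ^ k)"
    using \<open>prime p\<close> by (simp add: prime_imp_coprime coprime_commute)
  then have "x dvd d"
    using \<open>x dvd p ^ k * d\<close> coprime_dvd_mult_right_iff by blast
  with \<open>d \<noteq> 0\<close> \<open>\<bar>d\<bar> < \<bar>x\<bar>\<close> show False
    using dvd_imp_le_int[OF \<open>d \<noteq> 0\<close>] by fastforce
qed

lemma prime_dvd_value_of_nonunit_factor: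
  fixes f g h :: "int poly" and \<alpha> :: real and p x d :: int
  assumes "content f = 1" "f = g * h" "\<not> is_unit g"
    and roots: "\<And>z :: complex. poly (map_poly of_int f) z = 0 \<Longrightarrow> norm z < \<alpha>"
    and "\<alpha> + d \<le> x" "0 < d" "prime p" "\<bar>poly f x\<bar> = p ^ k * d"
  shows "p dvd poly g x"
proof (rule prime_dvd_of_large_divisor[OF \<open>prime p\<close>])
  show "poly g x dvd p ^ k * d"
    using assms(2,8) by (metis dvd_abs_iff dvd_triv_left poly_mult)
  have "real_of_int d < \<bar>of_int (poly g x)\<bar>"
    using degree_pos_of_nonunit_factor_of_primitive[OF assms(1-3)] roots assms(2,5,6)
    by (intro abs_poly_gt_of_complex_roots_in_ball[where \<alpha> = \<alpha>]) (auto simp: map_poly_of_int_mult)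
  then show "\<bar>d\<bar> < \<bar>poly g x\<bar>"
    using \<open>0 < d\<close> by linarith
qed (use \<open>0 < d\<close> in simp)

theorem theorem1:
  fixes f :: "int poly" and \<alpha> :: real and n d k l p :: nat
  assumes prim: "content f = 1"
    and alpha_pos: "\<alpha> > 0"
    and dom: "\<bar>real_of_int (coeff f (degree f))\<bar> * \<alpha> ^ degree f
              > (\<Sum>i<degree f. \<bar>real_of_int (coeff f i)\<bar> * \<alpha> ^ i)"
    and pos: "n > 0" "d > 0" "k > 0" "l > 0"
    and l_le: "l \<le> degree f"
    and p_prime: "prime p"
    and p_nd: "\<not> p dvd d"
    and n_ge: "real n \<ge> \<alpha> + real d"
    and fn: "poly f (int n) = int p ^ k * int d \<or> poly f (int n) = - (int p ^ k * int d)"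
    and cop: "gcd k l = 1"
    and divs: "\<And>i. i < l \<Longrightarrow> int p ^ k dvd taylor_coeff f i (int n)"
    and ndiv: "k > 1 \<Longrightarrow> \<not> int p dvd taylor_coeff f l (int n)"
  shows "irreducible f"
proof -
  have p: "prime (int p)"
    using p_prime by simp
  have fn_abs: "\<bar>poly f (int n)\<bar> = int p ^ k * int d"
    using fn by auto
  have roots: "norm z < \<alpha>" if "poly (map_poly of_int f) z = 0" for z :: complex
    using norm_root_less_of_dominant_lead_coeff[OF alpha_pos _ that] dom
    by (simp add: degree_map_poly coeff_map_poly)
  have factor_dvd: "int p dvd poly g (int n)" if "f = g * h" "\<not> is_unit g" for g h
    using prime_dvd_value_of_nonunit_factor[OF prim that roots _ _ p fn_abs] n_ge pos(2) by simp
  have "multiplicity (int p) (poly f (int n)) = k"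
    using multiplicity_power_mult_not_dvd[of "int p" "int d" k] p p_nd fn_abs
    by (metis multiplicity_normalize_right normalize_int_def prime_imp_prime_elem int_dvd_int_iff)
  show ?thesis
  proof (rule irreducibleI)
    show "f \<noteq> 0" "\<not> is_unit f"
      using l_le pos(4) by (auto simp: is_unit_poly_iff)
    fix g h assume "f = g * h"
    have "\<not> (int p dvd poly g (int n) \<and> int p dvd poly h (int n))"
      using \<open>multiplicity _ _ = k\<close> fn_abs pos cop divs ndiv
      by (intro prime_not_dvd_both_values_of_factors[OF p \<open>f = g * h\<close>])
         (auto simp: coprime_iff_gcd_eq_1)
    then show "is_unit g \<or> is_unit h"
      using factor_dvd[of g h] factor_dvd[of h g] \<open>f = g * h\<close> by (auto simp: mult.commute)
  qed
qed

end
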